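(* Let $a>0$. If $\phi\in\mathcal D[0,\infty)$ is absolutely continuous on every compact interval $[0,T]$, then so is $\Lambda_a(\phi)$.
   Context: $\mathcal D[0,\infty)$ is the space of right-continuous functions $[0,\infty)\to\mathbb R$ with left limits. Notation: $x^+=\max(x,0)$, $x\wedge y=\min(x,y)$. For $a>0$, $\Lambda_a(\phi)(t)=\phi(t)-\sup_{s\in[0,t]}\big[(\phi(s)-a)^+\wedge\inf_{u\in[s,t]}\phi(u)\big]$. *)

theory Defs
  imports "HOL-Analysis.Analysis"
begin

text \<open>Cadlag functions on [0,infinity): right-continuous at every t >= 0,
  with left limits at every t > 0. Values at negative arguments are irrelevant.\<close>
definition cadlag :: "(real \<Rightarrow> real) \<Rightarrow> bool" where
  "cadlag f \<longleftrightarrow> (\<forall>t\<ge>0. (f \<longlongrightarrow> f t) (at_right t)) \<and>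
                  (\<forall>t>0. \<exists>l. (f \<longlongrightarrow> l) (at_left t))"

definition abs_cont_on :: "real \<Rightarrow> real \<Rightarrow> (real \<Rightarrow> real) \<Rightarrow> bool" where
  "abs_cont_on S T f \<longleftrightarrow>
     (\<forall>\<epsilon>>0. \<exists>\<delta>>0. \<forall>(n::nat) (a::nat \<Rightarrow> real) (b::nat \<Rightarrow> real).
        (\<forall>i<n. S \<le> a i \<and> a i \<le> b i \<and> b i \<le> T) \<and>
        (\<forall>i<n. \<forall>j<n. i \<noteq> j \<longrightarrow> b i \<le> a j \<or> b j \<le> a i) \<and>
        (\<Sum>i<n. b i - a i) < \<delta>
        \<longrightarrow> (\<Sum>i<n. \<bar>f (b i) - f (a i)\<bar>) < \<epsilon>)"

definition Lambda :: "real \<Rightarrow> (real \<Rightarrow> real) \<Rightarrow> real \<Rightarrow> real" where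
  "Lambda a \<phi> t = \<phi> t - (SUP s\<in>{0..t}. min (max (\<phi> s - a) 0) (INF u\<in>{s..t}. \<phi> u))"

end

theory Submission
  imports Defs
begin

text \<open>
  Write \<open>Lambda a \<phi> t = \<phi> t - P t\<close>, where the push term \<open>P t\<close> is the supremum
  over \<open>r \<in> [0,t]\<close> of \<open>min (max (\<phi> r - a) 0) (inf of \<phi> over [r,t])\<close>.
  The key estimate is local: if \<phi> is bounded below on [0,t] and oscillates by at
  most M on [s,t], then \<open>|P t - P s| \<le> M\<close>, hence
  \<open>|Lambda a \<phi> t - Lambda a \<phi> s| \<le> 2M\<close>.

  Absolute continuity is then transferred by a general lemma: if every increment
  of g over [s,t] is bounded by C times the oscillation of f there, and f is
  absolutely continuous, so is g.  For this we show that an absolutely continuous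
  f also controls sums of oscillations: on each interval of a non-overlapping
  family pick the points where the (continuous) f attains its maximum and
  minimum; they span a shorter non-overlapping family whose increments are
  exactly the oscillations.
\<close>

definition nonoverlapping_in ::
    "real \<Rightarrow> real \<Rightarrow> nat \<Rightarrow> (nat \<Rightarrow> real) \<Rightarrow> (nat \<Rightarrow> real) \<Rightarrow> bool" where
  "nonoverlapping_in S T n p q \<longleftrightarrow>
     (\<forall>i<n. S \<le> p i \<and> p i \<le> q i \<and> q i \<le> T) \<and>
     (\<forall>i<n. \<forall>j<n. i \<noteq> j \<longrightarrow> q i \<le> p j \<or> q j \<le> p i)"

lemma abs_cont_on_iff:
  "abs_cont_on S T f \<longleftrightarrow>
     (\<forall>\<epsilon>>0. \<exists>\<delta>>0. \<forall>n p q. nonoverlapping_in S T n p q \<and> (\<Sum>i<n. q i - p i) < \<delta>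
        \<longrightarrow> (\<Sum>i<n. \<bar>f (q i) - f (p i)\<bar>) < \<epsilon>)"
  unfolding abs_cont_on_def nonoverlapping_in_def by (simp only: conj_assoc)

lemma nonoverlapping_in_shrink:
  assumes "nonoverlapping_in S T n p q"
    and "\<And>i. i < n \<Longrightarrow> p i \<le> p' i \<and> p' i \<le> q' i \<and> q' i \<le> q i"
  shows "nonoverlapping_in S T n p' q'"
  unfolding nonoverlapping_in_def
proof (intro conjI allI impI)
  fix i assume i: "i < n"
  with assms show "S \<le> p' i" "p' i \<le> q' i" "q' i \<le> T"
    unfolding nonoverlapping_in_def by (fastforce intro: order_trans)+
next
  fix i j assume "i < n" "j < n" "i \<noteq> j"
  then have "q i \<le> p j \<or> q j \<le> p i"
    using assms(1) unfolding nonoverlapping_in_def by blast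
  then show "q' i \<le> p' j \<or> q' j \<le> p' i"
    using assms(2)[OF \<open>i < n\<close>] assms(2)[OF \<open>j < n\<close>] by linarith
qed

text \<open>An absolutely continuous function is continuous (use a family of one interval).\<close>
lemma abs_cont_on_imp_continuous_on:
  assumes "abs_cont_on S T f"
  shows "continuous_on {S..T} f"
  unfolding continuous_on_iff
proof (intro ballI allI impI)
  fix x e :: real assume x: "x \<in> {S..T}" and e: "0 < e"
  obtain d where d: "d > 0"
    and H: "\<And>n p q. nonoverlapping_in S T n p q \<Longrightarrow> (\<Sum>i<n. q i - p i) < d
              \<Longrightarrow> (\<Sum>i<n. \<bar>f (q i) - f (p i)\<bar>) < e"
    using assms e unfolding abs_cont_on_iff by meson
  show "\<exists>d>0. \<forall>y\<in>{S..T}. dist y x < d \<longrightarrow> dist (f y) (f x) < e"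
  proof (intro exI[of _ d] conjI ballI impI d)
    fix y assume y: "y \<in> {S..T}" and dy: "dist y x < d"
    have "nonoverlapping_in S T 1 (\<lambda>_. min x y) (\<lambda>_. max x y)"
      using x y unfolding nonoverlapping_in_def by auto
    moreover have "(\<Sum>i<(1::nat). max x y - min x y) < d"
      using dy by (simp add: dist_real_def abs_real_def max_def min_def split: if_splits)
    ultimately have "\<bar>f (max x y) - f (min x y)\<bar> < e"
      using H[of 1 "\<lambda>_. min x y" "\<lambda>_. max x y"] by simp
    thus "dist (f y) (f x) < e"
      by (cases "x \<le> y") (simp_all add: dist_real_def abs_minus_commute)
  qed
qed

section \<open>Absolutely continuous functions control sums of oscillations\<close>

lemma extremal_points:
  fixes f :: "real \<Rightarrow> real"
  assumes cont: "continuous_on {S..T} f" and fam: "nonoverlapping_in S T n p q"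
  obtains u v where "\<And>i. i < n \<Longrightarrow> u i \<in> {p i..q i} \<and> v i \<in> {p i..q i} \<and>
                       (\<forall>x\<in>{p i..q i}. f (v i) \<le> f x \<and> f x \<le> f (u i))"
proof -
  have "\<exists>u v. u \<in> {p i..q i} \<and> v \<in> {p i..q i} \<and> (\<forall>x\<in>{p i..q i}. f v \<le> f x \<and> f x \<le> f u)"
    if i: "i < n" for i
  proof -
    have c: "continuous_on {p i..q i} f"
      using fam i unfolding nonoverlapping_in_def by (intro continuous_on_subset[OF cont]) auto
    have ne: "{p i..q i} \<noteq> {}" using fam i unfolding nonoverlapping_in_def by auto
    obtain u where "u \<in> {p i..q i}" "\<forall>x\<in>{p i..q i}. f x \<le> f u"
      using continuous_attains_sup[OF compact_Icc ne c] by blast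
    moreover obtain v where "v \<in> {p i..q i}" "\<forall>x\<in>{p i..q i}. f v \<le> f x"
      using continuous_attains_inf[OF compact_Icc ne c] by blast
    ultimately show ?thesis by blast
  qed
  then show ?thesis using that by metis
qed

lemma abs_cont_on_oscillation_sum:
  assumes ac: "abs_cont_on S T f" and e: "\<epsilon> > 0"
  obtains \<delta> where "\<delta> > 0"
    and "\<And>n p q. nonoverlapping_in S T n p q \<Longrightarrow> (\<Sum>i<n. q i - p i) < \<delta> \<Longrightarrow>
           \<exists>M. (\<forall>i<n. \<forall>x\<in>{p i..q i}. \<forall>y\<in>{p i..q i}. \<bar>f x - f y\<bar> \<le> M i) \<and> (\<Sum>i<n. M i) < \<epsilon>"
proof -
  obtain \<delta> where \<delta>: "\<delta> > 0"
    and H: "\<And>n p q. nonoverlapping_in S T n p q \<Longrightarrow> (\<Sum>i<n. q i - p i) < \<delta>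
              \<Longrightarrow> (\<Sum>i<n. \<bar>f (q i) - f (p i)\<bar>) < \<epsilon>"
    using ac e unfolding abs_cont_on_iff by meson
  have "\<exists>M. (\<forall>i<n. \<forall>x\<in>{p i..q i}. \<forall>y\<in>{p i..q i}. \<bar>f x - f y\<bar> \<le> M i) \<and> (\<Sum>i<n. M i) < \<epsilon>"
    if fam: "nonoverlapping_in S T n p q" and len: "(\<Sum>i<n. q i - p i) < \<delta>" for n p q
  proof -
    obtain u v where uv: "\<And>i. i < n \<Longrightarrow> u i \<in> {p i..q i} \<and> v i \<in> {p i..q i} \<and>
                       (\<forall>x\<in>{p i..q i}. f (v i) \<le> f x \<and> f x \<le> f (u i))"
      using extremal_points[OF abs_cont_on_imp_continuous_on[OF ac] fam] by blast
    define p' where "p' i = min (u i) (v i)" for i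
    define q' where "q' i = max (u i) (v i)" for i
    have inside: "p i \<le> p' i \<and> p' i \<le> q' i \<and> q' i \<le> q i" if "i < n" for i
      using uv[OF that] unfolding p'_def q'_def by auto
    have "(\<Sum>i<n. q' i - p' i) \<le> (\<Sum>i<n. q i - p i)"
      using inside by (intro sum_mono) fastforce
    then have "(\<Sum>i<n. \<bar>f (q' i) - f (p' i)\<bar>) < \<epsilon>"
      using H[OF nonoverlapping_in_shrink[OF fam inside]] len by linarith
    moreover have "\<bar>f (q' i) - f (p' i)\<bar> = f (u i) - f (v i)" if "i < n" for i
      using uv[OF that] unfolding p'_def q'_def by (auto simp: min_def max_def)
    ultimately have "(\<Sum>i<n. f (u i) - f (v i)) < \<epsilon>" by simp
    moreover have "\<bar>f x - f y\<bar> \<le> f (u i) - f (v i)"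
      if "i < n" "x \<in> {p i..q i}" "y \<in> {p i..q i}" for i x y
    proof -
      have "f (v i) \<le> f x" "f x \<le> f (u i)" "f (v i) \<le> f y" "f y \<le> f (u i)"
        using uv[OF that(1)] that(2,3) by auto
      then show ?thesis unfolding abs_le_iff by linarith
    qed
    ultimately show ?thesis by (intro exI[of _ "\<lambda>i. f (u i) - f (v i)"]) blast
  qed
  with \<delta> show ?thesis using that by blast
qed

lemma abs_cont_on_if_oscillation_dominated:
  assumes ac: "abs_cont_on S T f" and C: "C > 0"
    and dom: "\<And>s t M. S \<le> s \<Longrightarrow> s \<le> t \<Longrightarrow> t \<le> T \<Longrightarrow>
                \<forall>x\<in>{s..t}. \<forall>y\<in>{s..t}. \<bar>f x - f y\<bar> \<le> M \<Longrightarrow> \<bar>g t - g s\<bar> \<le> C * M"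
  shows "abs_cont_on S T g"
  unfolding abs_cont_on_iff
proof (intro allI impI)
  fix \<epsilon> :: real assume e: "\<epsilon> > 0"
  obtain \<delta> where \<delta>: "\<delta> > 0"
    and osc: "\<And>n p q. nonoverlapping_in S T n p q \<Longrightarrow> (\<Sum>i<n. q i - p i) < \<delta> \<Longrightarrow>
           \<exists>M. (\<forall>i<n. \<forall>x\<in>{p i..q i}. \<forall>y\<in>{p i..q i}. \<bar>f x - f y\<bar> \<le> M i) \<and> (\<Sum>i<n. M i) < \<epsilon> / C"
    using abs_cont_on_oscillation_sum[OF ac divide_pos_pos[OF e C]] by blast
  have "(\<Sum>i<n. \<bar>g (q i) - g (p i)\<bar>) < \<epsilon>"
    if fam: "nonoverlapping_in S T n p q" and len: "(\<Sum>i<n. q i - p i) < \<delta>" for n p q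
  proof -
    obtain M where M: "\<forall>i<n. \<forall>x\<in>{p i..q i}. \<forall>y\<in>{p i..q i}. \<bar>f x - f y\<bar> \<le> M i"
      and sumM: "(\<Sum>i<n. M i) < \<epsilon> / C"
      using osc[OF fam len] by blast
    have "\<bar>g (q i) - g (p i)\<bar> \<le> C * M i" if "i < n" for i
      using fam M that unfolding nonoverlapping_in_def by (intro dom) auto
    then have "(\<Sum>i<n. \<bar>g (q i) - g (p i)\<bar>) \<le> (\<Sum>i<n. C * M i)"
      by (intro sum_mono) simp
    also have "\<dots> = C * (\<Sum>i<n. M i)" by (simp add: sum_distrib_left)
    also have "\<dots> < \<epsilon>" using sumM C by (simp add: field_simps)
    finally show ?thesis .
  qed
  with \<delta> show "\<exists>\<delta>>0. \<forall>n p q. nonoverlapping_in S T n p q \<and> (\<Sum>i<n. q i - p i) < \<delta>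
        \<longrightarrow> (\<Sum>i<n. \<bar>g (q i) - g (p i)\<bar>) < \<epsilon>" by blast
qed

section \<open>The oscillation estimate for \<open>Lambda\<close>\<close>

definition floor_term :: "real \<Rightarrow> (real \<Rightarrow> real) \<Rightarrow> real \<Rightarrow> real \<Rightarrow> real" where
  "floor_term a \<phi> t r = min (max (\<phi> r - a) 0) (INF u\<in>{r..t}. \<phi> u)"

definition push_term :: "real \<Rightarrow> (real \<Rightarrow> real) \<Rightarrow> real \<Rightarrow> real" where
  "push_term a \<phi> t = (SUP r\<in>{0..t}. floor_term a \<phi> t r)"

lemma Lambda_eq_push_term: "Lambda a \<phi> t = \<phi> t - push_term a \<phi> t"
  unfolding Lambda_def push_term_def floor_term_def ..

context
  fixes \<phi> :: "real \<Rightarrow> real" and t :: real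
  assumes bdd: "bdd_below (\<phi> ` {0..t})"
begin

lemma INF_le_point:
  assumes "0 \<le> r" "x \<le> t" "w \<in> {r..x}"
  shows "(INF u\<in>{r..x}. \<phi> u) \<le> \<phi> w"
proof (rule cINF_lower[OF _ assms(3)])
  show "bdd_below (\<phi> ` {r..x})"
    using assms by (intro bdd_below_mono[OF bdd] image_mono) auto
qed

lemma floor_term_le: "0 \<le> r \<Longrightarrow> r \<le> x \<Longrightarrow> x \<le> t \<Longrightarrow> floor_term a \<phi> x r \<le> \<phi> x"
  using INF_le_point[of r x x] unfolding floor_term_def by auto

lemma bdd_above_floor_term: "x \<le> t \<Longrightarrow> bdd_above (floor_term a \<phi> x ` {0..x})"
  using floor_term_le by (intro bdd_aboveI2[where M="\<phi> x"]) auto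

lemma floor_term_horizon:
  assumes r: "0 \<le> r" "r \<le> s" and st: "s \<le> t"
    and M: "\<forall>u\<in>{s..t}. \<forall>v\<in>{s..t}. \<bar>\<phi> u - \<phi> v\<bar> \<le> M"
  shows "floor_term a \<phi> t r \<le> floor_term a \<phi> s r"
    and "floor_term a \<phi> s r \<le> floor_term a \<phi> t r + M"
proof -
  have "(INF u\<in>{r..t}. \<phi> u) \<le> (INF u\<in>{r..s}. \<phi> u)"
    using r st by (intro cINF_greatest) (auto intro!: INF_le_point)
  then show "floor_term a \<phi> t r \<le> floor_term a \<phi> s r"
    unfolding floor_term_def by auto
  have M0: "M \<ge> 0" using M r st by force
  have "(INF u\<in>{r..s}. \<phi> u) - M \<le> \<phi> u" if u: "u \<in> {r..t}" for u
  proof (cases "u \<le> s")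
    case True
    then show ?thesis using INF_le_point[of r s u] r st u M0 by auto
  next
    case False
    then have "\<bar>\<phi> s - \<phi> u\<bar> \<le> M" using M u r st by auto
    moreover have "(INF u\<in>{r..s}. \<phi> u) \<le> \<phi> s" using INF_le_point[of r s s] r st by auto
    ultimately show ?thesis by linarith
  qed
  then have "(INF u\<in>{r..s}. \<phi> u) - M \<le> (INF u\<in>{r..t}. \<phi> u)"
    using r st by (intro cINF_greatest) auto
  then show "floor_term a \<phi> s r \<le> floor_term a \<phi> t r + M"
    unfolding floor_term_def using M0 by (auto simp: min_def max_def)
qed

text \<open>The push term moves by at most the oscillation of \<phi> on [s,t].  New
  indices \<open>r \<in> (s,t]\<close> contribute at most \<open>floor_term a \<phi> s s + M\<close>.\<close>
lemma push_term_oscillation: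
  assumes s: "0 \<le> s" "s \<le> t"
    and M: "\<forall>u\<in>{s..t}. \<forall>v\<in>{s..t}. \<bar>\<phi> u - \<phi> v\<bar> \<le> M"
  shows "\<bar>push_term a \<phi> t - push_term a \<phi> s\<bar> \<le> M"
proof -
  let ?P = "\<lambda>x. SUP r\<in>{0..x}. floor_term a \<phi> x r"
  have M0: "M \<ge> 0" using M s by force
  have upper: "floor_term a \<phi> x r \<le> ?P x" if "0 \<le> r" "r \<le> x" "x \<le> t" for x r
    using that by (intro cSUP_upper bdd_above_floor_term) auto
  have "?P s \<le> ?P t + M"
  proof (rule cSUP_least)
    fix r assume r: "r \<in> {0..s}"
    then have "floor_term a \<phi> s r \<le> floor_term a \<phi> t r + M"
      using floor_term_horizon(2)[OF _ _ s(2) M] by auto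
    moreover have "floor_term a \<phi> t r \<le> ?P t" using upper[of r t] r s by auto
    ultimately show "floor_term a \<phi> s r \<le> ?P t + M" by linarith
  qed (use s in auto)
  moreover have "?P t \<le> ?P s + M"
  proof (rule cSUP_least)
    fix r assume r: "r \<in> {0..t}"
    show "floor_term a \<phi> t r \<le> ?P s + M"
    proof (cases "r \<le> s")
      case True
      then have "floor_term a \<phi> t r \<le> floor_term a \<phi> s r"
        using floor_term_horizon(1)[OF _ True s(2) M] r by auto
      moreover have "floor_term a \<phi> s r \<le> ?P s" using upper[of r s] r True s by auto
      ultimately show ?thesis using M0 by linarith
    next
      case False
      have "(INF u\<in>{r..t}. \<phi> u) \<le> \<phi> r" using INF_le_point[of r t r] r False s by auto
      then have "floor_term a \<phi> t r \<le> min (max (\<phi> r - a) 0) (\<phi> r)"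
        unfolding floor_term_def by auto
      moreover have "\<bar>\<phi> r - \<phi> s\<bar> \<le> M" using M r False s by auto
      moreover have "floor_term a \<phi> s s = min (max (\<phi> s - a) 0) (\<phi> s)"
        unfolding floor_term_def by simp
      moreover have "floor_term a \<phi> s s \<le> ?P s" using upper[of s s] s by auto
      ultimately show ?thesis by (auto simp: min_def max_def split: if_splits)
    qed
  qed (use s in auto)
  ultimately show ?thesis unfolding push_term_def by linarith
qed

lemma Lambda_oscillation:
  assumes s: "0 \<le> s" "s \<le> t"
    and M: "\<forall>u\<in>{s..t}. \<forall>v\<in>{s..t}. \<bar>\<phi> u - \<phi> v\<bar> \<le> M"
  shows "\<bar>Lambda a \<phi> t - Lambda a \<phi> s\<bar> \<le> 2 * M"
proof -
  have "\<bar>\<phi> t - \<phi> s\<bar> \<le> M" using M s by auto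
  with push_term_oscillation[OF s M, of a] show ?thesis
    unfolding Lambda_eq_push_term by linarith
qed

end

theorem corollary2p3:
  fixes a :: real and \<phi> :: "real \<Rightarrow> real"
  assumes "a > 0"
    and "cadlag \<phi>"
    and "\<And>T. T \<ge> 0 \<Longrightarrow> abs_cont_on 0 T \<phi>"
  shows "\<forall>T\<ge>0. abs_cont_on 0 T (Lambda a \<phi>)"
proof (intro allI impI)
  fix T :: real assume "T \<ge> 0"
  then have ac: "abs_cont_on 0 T \<phi>" by (rule assms(3))
  have bdd: "bdd_below (\<phi> ` {0..t})" if "t \<le> T" for t
  proof -
    have "continuous_on {0..t} \<phi>"
      using continuous_on_subset[OF abs_cont_on_imp_continuous_on[OF ac]] that by simp
    then have "compact (\<phi> ` {0..t})" by (rule compact_continuous_image[OF _ compact_Icc])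
    then show ?thesis by (simp add: bounded_imp_bdd_below compact_imp_bounded)
  qed
  show "abs_cont_on 0 T (Lambda a \<phi>)"
  proof (rule abs_cont_on_if_oscillation_dominated[OF ac, of 2])
    fix s t M
    assume "0 \<le> s" "s \<le> t" "t \<le> T" "\<forall>x\<in>{s..t}. \<forall>y\<in>{s..t}. \<bar>\<phi> x - \<phi> y\<bar> \<le> M"
    then show "\<bar>Lambda a \<phi> t - Lambda a \<phi> s\<bar> \<le> 2 * M"
      using Lambda_oscillation[OF bdd[OF \<open>t \<le> T\<close>]] by simp
  qed simp
qed

end
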